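(* Let $X\subset\mathbb C^s$ be finite and let $A\subset\mathbb N_0^s$ be a finite set such that $\Pi_A$ is a degree reducing interpolation space for $X$. Then there exists an inner product $(\cdot,\cdot)$ on $\Pi$ such that the set of polynomials that are reduced with respect to $(\cdot,\cdot)$ and the ideal $I_X$ is exactly $\Pi_A$ (i.e. $\Pi_A=r(\Pi)$, the range of the associated reduction/normal form map).
   Context: $\Pi=\mathbb C[x_1,\dots,x_s]$, $\deg$ is total degree with $\deg 0<0$; $\Pi_j^0$ is the space of homogeneous polynomials of degree exactly $j$ (together with $0$). For $A\subset\mathbb N_0^s$, $\Pi_A$ is the span of $x^\alpha$, $\alpha\in A$. $I_X=\{p\in\Pi:p(x)=0\ \forall x\in X\}$. A subspace $\mathcal P\subseteq\Pi$ is a degree reducing interpolation space for $X$ if for every $q\in\Pi$ there is exactly one $p\in\mathcal P$ with $p|_X=q|_X$, and this $p$ satisfies $\deg p\le\deg q$. For $p\neq0$ write $p=\sum_{j=0}^{\deg p}p_j$ with $p_j\in\Pi_j^0$ its homogeneous components, and let $\Lambda(p)=p_{\deg p}$ be its leading form. Given an inner product $(\cdot,\cdot)$ on $\Pi$, a polynomial $p$ is called reduced (with respect to $(\cdot,\cdot)$ and $I_X$) if for every $j$ the component $p_j$ is orthogonal to every leading form $\Lambda(q)$ with $q\in I_X\setminus\{0\}$, $\deg q=j$. *)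

theory Defs
  imports Complex_Main "HOL-Library.Poly_Mapping"
begin

text \<open>Multivariate polynomials in the variables indexed by the finite type 'n
  (i.e. s = CARD('n)): maps from exponent vectors ('n \<Rightarrow> nat) to complex
  coefficients with finite support.\<close>

type_synonym 'n mpoly = "('n \<Rightarrow> nat) \<Rightarrow>\<^sub>0 complex"

definition tdeg :: "('n::finite \<Rightarrow> nat) \<Rightarrow> nat" where
  "tdeg \<alpha> = (\<Sum>i\<in>UNIV. \<alpha> i)"

definition pdeg :: "'n::finite mpoly \<Rightarrow> int" where
  "pdeg p = (if p = 0 then -1 else int (Max (tdeg ` Poly_Mapping.keys p)))"

definition peval :: "'n::finite mpoly \<Rightarrow> ('n \<Rightarrow> complex) \<Rightarrow> complex" where
  "peval p x = (\<Sum>\<alpha>\<in>Poly_Mapping.keys p. Poly_Mapping.lookup p \<alpha> * (\<Prod>i\<in>UNIV. x i ^ \<alpha> i))"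

definition smult_mp :: "complex \<Rightarrow> 'n mpoly \<Rightarrow> 'n mpoly" where
  "smult_mp c p = Poly_Mapping.map (\<lambda>a. c * a) p"

definition hcomp :: "nat \<Rightarrow> 'n::finite mpoly \<Rightarrow> 'n mpoly" where
  "hcomp j p = Abs_poly_mapping (\<lambda>\<alpha>. if tdeg \<alpha> = j then Poly_Mapping.lookup p \<alpha> else 0)"

definition lform :: "'n::finite mpoly \<Rightarrow> 'n mpoly" where
  "lform p = hcomp (nat (pdeg p)) p"

definition vanishing_ideal :: "('n::finite \<Rightarrow> complex) set \<Rightarrow> 'n mpoly set" where
  "vanishing_ideal X = {p. \<forall>x\<in>X. peval p x = 0}"

definition Pi_A :: "('n \<Rightarrow> nat) set \<Rightarrow> 'n mpoly set" where
  "Pi_A A = {p. Poly_Mapping.keys p \<subseteq> A}"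

definition deg_reducing_interp_space ::
  "'n::finite mpoly set \<Rightarrow> ('n \<Rightarrow> complex) set \<Rightarrow> bool" where
  "deg_reducing_interp_space P X \<longleftrightarrow>
     (\<forall>q. \<exists>!p. p \<in> P \<and> (\<forall>x\<in>X. peval p x = peval q x)) \<and>
     (\<forall>q p. p \<in> P \<and> (\<forall>x\<in>X. peval p x = peval q x) \<longrightarrow> pdeg p \<le> pdeg q)"

definition inner_product :: "('n mpoly \<Rightarrow> 'n mpoly \<Rightarrow> complex) \<Rightarrow> bool" where
  "inner_product ip \<longleftrightarrow>
     (\<forall>p q r. ip (p + q) r = ip p r + ip q r) \<and>
     (\<forall>c p r. ip (smult_mp c p) r = c * ip p r) \<and>
     (\<forall>p q. ip p q = cnj (ip q p)) \<and>
     (\<forall>p. p \<noteq> 0 \<longrightarrow> Re (ip p p) > 0)"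

definition reduced ::
  "('n::finite mpoly \<Rightarrow> 'n mpoly \<Rightarrow> complex) \<Rightarrow> 'n mpoly set \<Rightarrow> 'n mpoly \<Rightarrow> bool" where
  "reduced ip I p \<longleftrightarrow>
     (\<forall>j::nat. \<forall>q\<in>I. q \<noteq> 0 \<and> pdeg q = int j \<longrightarrow> ip (hcomp j p) (lform q) = 0)"

end

theory Submission imports Defs begin

text \<open>
  Let \<open>L\<close> be the interpolation projector onto \<open>\<Pi>\<^sub>A\<close> and let \<open>T\<close> map each homogeneous component
  \<open>p\<^sub>j\<close> of \<open>p\<close> to the degree-\<open>j\<close> component of \<open>L p\<^sub>j\<close>. Take the inner product
  \<open>(p, q) = \<langle>T p, T q\<rangle> + \<langle>p - T p, q - T q\<rangle>\<close>, with \<open>\<langle>_, _\<rangle>\<close> the coefficient inner product.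
  If \<open>q \<in> I\<^sub>X\<close> has degree \<open>j\<close>, then \<open>L q\<^sub>j = L (q\<^sub>j - q)\<close> has degree \<open>< j\<close> because \<open>L\<close> is degree
  reducing, so \<open>T (\<Lambda> q) = 0\<close>; hence every element of \<open>\<Pi>\<^sub>A\<close>, being fixed by \<open>T\<close>, is reduced.
  Conversely, for a homogeneous \<open>h\<close> of degree \<open>j\<close>, \<open>h - T h\<close> is either zero or the leading form of
  \<open>h - L h \<in> I\<^sub>X\<close>, and then \<open>(h, h - T h) = \<langle>h - T h, h - T h\<rangle>\<close>; so reducedness forces \<open>T h = h\<close>,
  i.e. \<open>h \<in> \<Pi>\<^sub>A\<close>.
\<close>

abbreviation keys :: "'n mpoly \<Rightarrow> ('n \<Rightarrow> nat) set" where
  "keys \<equiv> Poly_Mapping.keys"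

abbreviation lookup :: "'n mpoly \<Rightarrow> ('n \<Rightarrow> nat) \<Rightarrow> complex" where
  "lookup \<equiv> Poly_Mapping.lookup"

lemma lookup_smult_mp [simp]: "lookup (smult_mp c p) a = c * lookup p a"
  unfolding smult_mp_def by (simp add: Poly_Mapping.map.rep_eq when_def)

lemma lookup_hcomp [simp]: "lookup (hcomp j p) a = (if tdeg a = j then lookup p a else 0)"
proof -
  have "finite {a. (if tdeg a = j then lookup p a else 0) \<noteq> 0}"
    by (rule finite_subset[OF _ finite_keys[of p]]) (auto simp: in_keys_iff split: if_splits)
  then show ?thesis
    unfolding hcomp_def by simp
qed

lemma keys_smult_mp_subset: "keys (smult_mp c p) \<subseteq> keys p"
  by (auto simp: in_keys_iff)

lemma keys_hcomp_subset: "keys (hcomp j p) \<subseteq> keys p"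
  by (auto simp: in_keys_iff split: if_splits)

lemma smult_mp_diff: "smult_mp c (p - q) = smult_mp c p - smult_mp c q"
  by (rule poly_mapping_eqI) (simp add: lookup_minus algebra_simps)

lemma smult_mp_sum: "smult_mp c (sum f J) = (\<Sum>j\<in>J. smult_mp c (f j))"
  by (rule poly_mapping_eqI) (simp add: lookup_sum sum_distrib_left)

lemma hcomp_add: "hcomp j (p + q) = hcomp j p + hcomp j q"
  by (rule poly_mapping_eqI) (simp add: lookup_add)

lemma hcomp_diff: "hcomp j (p - q) = hcomp j p - hcomp j q"
  by (rule poly_mapping_eqI) (simp add: lookup_minus)

lemma hcomp_smult_mp: "hcomp j (smult_mp c p) = smult_mp c (hcomp j p)"
  by (rule poly_mapping_eqI) simp

lemma hcomp_zero [simp]: "hcomp j 0 = 0"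
  by (rule poly_mapping_eqI) simp

lemma hcomp_eq_0_if_no_key: "j \<notin> tdeg ` keys p \<Longrightarrow> hcomp j p = 0"
  by (rule poly_mapping_eqI) (auto simp: in_keys_iff)

lemma peval_eq_sum: "finite S \<Longrightarrow> keys p \<subseteq> S \<Longrightarrow>
    peval p x = (\<Sum>a\<in>S. lookup p a * (\<Prod>i\<in>UNIV. x i ^ a i))"
  unfolding peval_def by (rule sum.mono_neutral_left) (auto simp: in_keys_iff)

lemma peval_add: "peval (p + q) x = peval p x + peval q x"
  using keys_add[of p q]
  by (simp add: peval_eq_sum[of "keys p \<union> keys q"] lookup_add distrib_right sum.distrib)

lemma peval_diff: "peval (p - q) x = peval p x - peval q x"
  using peval_add[of "p - q" q x] by simp

lemma peval_smult_mp: "peval (smult_mp c p) x = c * peval p x"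
proof -
  have "peval (smult_mp c p) x = (\<Sum>a\<in>keys p. lookup (smult_mp c p) a * (\<Prod>i\<in>UNIV. x i ^ a i))"
    by (rule peval_eq_sum[OF finite_keys keys_smult_mp_subset])
  then show ?thesis
    by (simp add: peval_def sum_distrib_left mult.assoc)
qed

definition homogeneous :: "nat \<Rightarrow> 'n::finite mpoly \<Rightarrow> bool" where
  "homogeneous j h \<longleftrightarrow> (\<forall>a\<in>keys h. tdeg a = j)"

lemma homogeneous_hcomp: "homogeneous j (hcomp j p)"
  by (auto simp: homogeneous_def in_keys_iff split: if_splits)

lemma hcomp_homogeneous: "homogeneous j h \<Longrightarrow> hcomp j h = h"
  by (rule poly_mapping_eqI) (auto simp: homogeneous_def in_keys_iff)

lemma tdeg_le_pdeg: "a \<in> keys p \<Longrightarrow> int (tdeg a) \<le> pdeg p"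
  unfolding pdeg_def by auto

lemma pdeg_le: "(\<And>a. a \<in> keys p \<Longrightarrow> tdeg a \<le> k) \<Longrightarrow> pdeg p \<le> int k"
  unfolding pdeg_def by auto

lemma pdeg_less: "(\<And>a. a \<in> keys p \<Longrightarrow> tdeg a < k) \<Longrightarrow> pdeg p < int k"
  unfolding pdeg_def by (auto simp: Max_less_iff)

lemma pdeg_homogeneous: "homogeneous j h \<Longrightarrow> pdeg h \<le> int j"
  unfolding homogeneous_def by (rule pdeg_le) auto

lemma hcomp_eq_0_if_pdeg_less: "pdeg p < int j \<Longrightarrow> hcomp j p = 0"
  by (rule poly_mapping_eqI) (use tdeg_le_pdeg in \<open>fastforce simp: in_keys_iff\<close>)

lemma lform_eq_hcomp_if_nonzero:
  assumes "pdeg q \<le> int j" and "hcomp j q \<noteq> 0"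
  shows "q \<noteq> 0" and "pdeg q = int j" and "lform q = hcomp j q"
proof -
  obtain a where "a \<in> keys (hcomp j q)"
    using assms(2) by (metis poly_mapping_eqI lookup_zero in_keys_iff)
  then have "a \<in> keys q" and "tdeg a = j"
    using keys_hcomp_subset homogeneous_hcomp[of j q] by (auto simp: homogeneous_def)
  then show "q \<noteq> 0" and "pdeg q = int j"
    using tdeg_le_pdeg[of a q] assms(1) by auto
  then show "lform q = hcomp j q"
    by (simp add: lform_def)
qed

lemma lform_eq_hcomp_pdeg: "pdeg q = int j \<Longrightarrow> lform q = hcomp j q"
  by (simp add: lform_def)

lemma Pi_A_add: "p \<in> Pi_A A \<Longrightarrow> q \<in> Pi_A A \<Longrightarrow> p + q \<in> Pi_A A"
  unfolding Pi_A_def using keys_add[of p q] by auto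

lemma Pi_A_smult_mp: "p \<in> Pi_A A \<Longrightarrow> smult_mp c p \<in> Pi_A A"
  unfolding Pi_A_def using keys_smult_mp_subset[of c p] by auto

lemma zero_in_Pi_A: "0 \<in> Pi_A A"
  unfolding Pi_A_def by auto

lemma Pi_A_hcomp: "p \<in> Pi_A A \<Longrightarrow> hcomp j p \<in> Pi_A A"
  unfolding Pi_A_def using keys_hcomp_subset[of j p] by auto

definition coeff_inner :: "'n mpoly \<Rightarrow> 'n mpoly \<Rightarrow> complex" where
  "coeff_inner p q = (\<Sum>a\<in>keys p. lookup p a * cnj (lookup q a))"

lemma coeff_inner_eq_sum: "finite S \<Longrightarrow> keys p \<subseteq> S \<Longrightarrow>
    coeff_inner p q = (\<Sum>a\<in>S. lookup p a * cnj (lookup q a))"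
  unfolding coeff_inner_def by (rule sum.mono_neutral_left) (auto simp: in_keys_iff)

lemma coeff_inner_add_left: "coeff_inner (p + q) r = coeff_inner p r + coeff_inner q r"
  using keys_add[of p q]
  by (simp add: coeff_inner_eq_sum[of "keys p \<union> keys q"] lookup_add distrib_right sum.distrib)

lemma coeff_inner_smult_mp_left: "coeff_inner (smult_mp c p) r = c * coeff_inner p r"
proof -
  have "coeff_inner (smult_mp c p) r = (\<Sum>a\<in>keys p. lookup (smult_mp c p) a * cnj (lookup r a))"
    by (rule coeff_inner_eq_sum[OF finite_keys keys_smult_mp_subset])
  then show ?thesis
    by (simp add: coeff_inner_def sum_distrib_left mult.assoc)
qed

lemma coeff_inner_commute: "coeff_inner p q = cnj (coeff_inner q p)"
  using coeff_inner_eq_sum[of "keys p \<union> keys q" p q] coeff_inner_eq_sum[of "keys p \<union> keys q" q p]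
  by (simp add: mult.commute)

lemma coeff_inner_zero_left [simp]: "coeff_inner 0 q = 0"
  by (simp add: coeff_inner_def)

lemma coeff_inner_zero_right [simp]: "coeff_inner p 0 = 0"
  by (simp add: coeff_inner_def)

lemma Re_coeff_inner_self: "Re (coeff_inner p p) = (\<Sum>a\<in>keys p. (cmod (lookup p a))\<^sup>2)"
  unfolding coeff_inner_def by (simp add: Re_sum complex_mult_cnj cmod_power2)

lemma Re_coeff_inner_self_nonneg: "0 \<le> Re (coeff_inner p p)"
  unfolding Re_coeff_inner_self by (rule sum_nonneg) auto

lemma Re_coeff_inner_self_pos: "p \<noteq> 0 \<Longrightarrow> 0 < Re (coeff_inner p p)"
  unfolding Re_coeff_inner_self by (rule sum_pos) (auto simp: in_keys_iff)

context
  fixes A :: "('n::finite \<Rightarrow> nat) set" and X :: "('n \<Rightarrow> complex) set"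
  assumes interp_space: "deg_reducing_interp_space (Pi_A A) X"
begin

definition interp :: "'n mpoly \<Rightarrow> 'n mpoly" where
  "interp q = (THE p. p \<in> Pi_A A \<and> (\<forall>x\<in>X. peval p x = peval q x))"

definition graded_interp :: "'n mpoly \<Rightarrow> 'n mpoly" where
  "graded_interp p = (\<Sum>j\<in>tdeg ` keys p. hcomp j (interp (hcomp j p)))"

definition interp_inner :: "'n mpoly \<Rightarrow> 'n mpoly \<Rightarrow> complex" where
  "interp_inner p q = coeff_inner (graded_interp p) (graded_interp q)
     + coeff_inner (p - graded_interp p) (q - graded_interp q)"

lemma interp_in_Pi_A: "interp q \<in> Pi_A A"
  and peval_interp: "x \<in> X \<Longrightarrow> peval (interp q) x = peval q x"
  using theI'[of "\<lambda>p. p \<in> Pi_A A \<and> (\<forall>x\<in>X. peval p x = peval q x)"] interp_space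
  unfolding interp_def deg_reducing_interp_space_def by auto

lemma interp_unique: "p \<in> Pi_A A \<Longrightarrow> (\<And>x. x \<in> X \<Longrightarrow> peval p x = peval q x) \<Longrightarrow> interp q = p"
  unfolding interp_def
  by (rule the1_equality) (use interp_space in \<open>auto simp: deg_reducing_interp_space_def\<close>)

lemma pdeg_interp_le: "pdeg (interp q) \<le> pdeg q"
  using interp_space interp_in_Pi_A peval_interp unfolding deg_reducing_interp_space_def by blast

lemma interp_cong: "(\<And>x. x \<in> X \<Longrightarrow> peval q x = peval q' x) \<Longrightarrow> interp q = interp q'"
  by (simp add: interp_unique interp_in_Pi_A peval_interp)

lemma interp_add: "interp (p + q) = interp p + interp q"
  by (intro interp_unique) (simp_all add: Pi_A_add interp_in_Pi_A peval_add peval_interp)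

lemma interp_smult_mp: "interp (smult_mp c p) = smult_mp c (interp p)"
  by (intro interp_unique) (simp_all add: Pi_A_smult_mp interp_in_Pi_A peval_smult_mp peval_interp)

lemma interp_zero [simp]: "interp 0 = 0"
  by (intro interp_unique) (simp_all add: zero_in_Pi_A)

lemma interp_Pi_A: "p \<in> Pi_A A \<Longrightarrow> interp p = p"
  by (intro interp_unique) auto

lemma interp_error_vanishes: "q - interp q \<in> vanishing_ideal X"
  by (simp add: vanishing_ideal_def peval_diff peval_interp)

lemma graded_interp_eq_sum: "finite J \<Longrightarrow> tdeg ` keys p \<subseteq> J \<Longrightarrow>
    graded_interp p = (\<Sum>j\<in>J. hcomp j (interp (hcomp j p)))"
  unfolding graded_interp_def by (rule sum.mono_neutral_left) (auto simp: hcomp_eq_0_if_no_key)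

lemma graded_interp_add: "graded_interp (p + q) = graded_interp p + graded_interp q"
proof -
  have "tdeg ` keys (p + q) \<subseteq> tdeg ` keys p \<union> tdeg ` keys q"
    using keys_add[of p q] by auto
  then show ?thesis
    by (simp add: graded_interp_eq_sum[of "tdeg ` keys p \<union> tdeg ` keys q"]
        hcomp_add interp_add sum.distrib)
qed

lemma graded_interp_smult_mp: "graded_interp (smult_mp c p) = smult_mp c (graded_interp p)"
proof -
  have "graded_interp (smult_mp c p) = (\<Sum>j\<in>tdeg ` keys p. hcomp j (interp (hcomp j (smult_mp c p))))"
    using keys_smult_mp_subset[of c p] by (intro graded_interp_eq_sum) auto
  then show ?thesis
    by (simp add: graded_interp_def smult_mp_sum hcomp_smult_mp interp_smult_mp)
qed

lemma graded_interp_homogeneous: "homogeneous j h \<Longrightarrow> graded_interp h = hcomp j (interp h)"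
  by (subst graded_interp_eq_sum[of "{j}"]) (auto simp: homogeneous_def hcomp_homogeneous)

lemma inner_product_interp_inner: "inner_product interp_inner"
  unfolding inner_product_def
proof (intro conjI allI impI)
  fix p q r
  show "interp_inner (p + q) r = interp_inner p r + interp_inner q r"
    unfolding interp_inner_def graded_interp_add add_diff_add
    by (simp add: coeff_inner_add_left)
next
  fix c p r
  show "interp_inner (smult_mp c p) r = c * interp_inner p r"
    unfolding interp_inner_def graded_interp_smult_mp smult_mp_diff[symmetric]
    by (simp add: coeff_inner_smult_mp_left distrib_left)
next
  fix p q
  show "interp_inner p q = cnj (interp_inner q p)"
    unfolding interp_inner_def
    by (simp add: coeff_inner_commute[of "graded_interp p"] coeff_inner_commute[of "p - graded_interp p"])
next
  fix p :: "'n mpoly"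
  assume "p \<noteq> 0"
  then have "graded_interp p \<noteq> 0 \<or> p - graded_interp p \<noteq> 0"
    by auto
  then show "0 < Re (interp_inner p p)"
    unfolding interp_inner_def plus_complex.sel
    by (meson Re_coeff_inner_self_pos Re_coeff_inner_self_nonneg add_pos_nonneg add_nonneg_pos)
qed

lemma graded_interp_lform_vanishing:
  assumes "q \<in> vanishing_ideal X" and "pdeg q = int j"
  shows "graded_interp (lform q) = 0"
proof -
  have "interp (hcomp j q) = interp (hcomp j q - q)"
    using assms(1) by (intro interp_cong) (simp add: vanishing_ideal_def peval_diff)
  moreover have "pdeg (hcomp j q - q) < int j"
  proof (rule pdeg_less)
    fix a
    assume "a \<in> keys (hcomp j q - q)"
    then have "tdeg a \<noteq> j" and "a \<in> keys q"
      by (auto simp: in_keys_iff lookup_minus split: if_splits)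
    then show "tdeg a < j"
      using tdeg_le_pdeg[of a q] assms(2) by simp
  qed
  ultimately have "hcomp j (interp (hcomp j q)) = 0"
    using pdeg_interp_le[of "hcomp j q - q"] by (simp add: hcomp_eq_0_if_pdeg_less)
  then show ?thesis
    using assms(2) graded_interp_homogeneous[OF homogeneous_hcomp] by (simp add: lform_eq_hcomp_pdeg)
qed

lemma graded_interp_defect_lform:
  assumes h: "homogeneous j h" and nz: "h - graded_interp h \<noteq> 0"
  obtains q where "q \<in> vanishing_ideal X" "q \<noteq> 0" "pdeg q = int j"
    "lform q = h - graded_interp h"
proof
  let ?q = "h - interp h"
  have "pdeg ?q \<le> int j"
  proof (rule pdeg_le)
    fix a
    assume "a \<in> keys ?q"
    then consider "a \<in> keys h" | "a \<in> keys (interp h)"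
      using keys_diff[of h "interp h"] by auto
    then show "tdeg a \<le> j"
      using h pdeg_homogeneous[OF h] pdeg_interp_le[of h] tdeg_le_pdeg[of a "interp h"]
      by cases (auto simp: homogeneous_def)
  qed
  moreover have "h - graded_interp h = hcomp j ?q"
    using h by (simp add: graded_interp_homogeneous hcomp_diff hcomp_homogeneous)
  ultimately show "?q \<noteq> 0" "pdeg ?q = int j" "lform ?q = h - graded_interp h"
    using lform_eq_hcomp_if_nonzero nz by auto
  show "?q \<in> vanishing_ideal X"
    by (rule interp_error_vanishes)
qed

lemma reduced_if_in_Pi_A:
  assumes "p \<in> Pi_A A"
  shows "reduced interp_inner (vanishing_ideal X) p"
  unfolding reduced_def
proof (intro allI ballI impI)
  fix j q
  assume "q \<in> vanishing_ideal X" "q \<noteq> 0 \<and> pdeg q = int j"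
  then have "graded_interp (lform q) = 0"
    by (simp add: graded_interp_lform_vanishing)
  moreover have "graded_interp (hcomp j p) = hcomp j p"
    using assms graded_interp_homogeneous[OF homogeneous_hcomp]
    by (simp add: Pi_A_hcomp interp_Pi_A hcomp_homogeneous homogeneous_hcomp)
  ultimately show "interp_inner (hcomp j p) (lform q) = 0"
    by (simp add: interp_inner_def)
qed

lemma graded_interp_fixes_reduced:
  assumes red: "reduced interp_inner (vanishing_ideal X) p"
  shows "graded_interp (hcomp j p) = hcomp j p"
proof (rule ccontr)
  let ?h = "hcomp j p"
  assume "graded_interp ?h \<noteq> ?h"
  then obtain q where q: "q \<in> vanishing_ideal X" "q \<noteq> 0" "pdeg q = int j"
    and lf: "lform q = ?h - graded_interp ?h" and nz: "?h - graded_interp ?h \<noteq> 0"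
    using graded_interp_defect_lform[OF homogeneous_hcomp] by (metis right_minus_eq)
  have "interp_inner ?h (lform q) = 0"
    using red q unfolding reduced_def by blast
  then have "coeff_inner (?h - graded_interp ?h) (?h - graded_interp ?h) = 0"
    using graded_interp_lform_vanishing[OF q(1,3)] lf by (simp add: interp_inner_def)
  then show False
    using Re_coeff_inner_self_pos[OF nz] by simp
qed

lemma in_Pi_A_if_reduced:
  assumes "reduced interp_inner (vanishing_ideal X) p"
  shows "p \<in> Pi_A A"
  unfolding Pi_A_def
proof (intro CollectI subsetI)
  fix a
  assume "a \<in> keys p"
  then have "a \<in> keys (hcomp (tdeg a) p)"
    by (simp add: in_keys_iff)
  also have "hcomp (tdeg a) p = hcomp (tdeg a) (interp (hcomp (tdeg a) p))"
    using graded_interp_fixes_reduced[OF assms] graded_interp_homogeneous[OF homogeneous_hcomp]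
    by simp
  finally have "a \<in> keys (interp (hcomp (tdeg a) p))"
    using keys_hcomp_subset by blast
  then show "a \<in> A"
    using interp_in_Pi_A unfolding Pi_A_def by blast
qed

end

theorem lemma37:
  fixes X :: "('n::finite \<Rightarrow> complex) set" and A :: "('n \<Rightarrow> nat) set"
  assumes "finite X" and "finite A"
    and "deg_reducing_interp_space (Pi_A A) X"
  shows "\<exists>ip. inner_product ip \<and> {p. reduced ip (vanishing_ideal X) p} = Pi_A A"
proof (intro exI conjI)
  show "inner_product (interp_inner A X)"
    using assms(3) by (rule inner_product_interp_inner)
  show "{p. reduced (interp_inner A X) (vanishing_ideal X) p} = Pi_A A"
    using reduced_if_in_Pi_A[OF assms(3)] in_Pi_A_if_reduced[OF assms(3)] by blast
qed

end
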